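(* Let $P_1,\dots,P_N$ be orthogonal projections on a finite-dimensional complex Hilbert space, and let $\delta\in[0,1]$, $\alpha\in[0,1]$. Suppose that for at least $\delta N^2$ of the ordered pairs $(j,\ell)\in[N]^2$ one has $\|P_jP_\ell\|_{\mathrm{op}}\le\alpha$. Then \[ \left\|\frac1N\sum_{j=1}^NP_j\right\|_{\mathrm{op}}\le1-\frac\delta2(1-\alpha). \]
   Context: $\|\cdot\|_{\mathrm{op}}$ denotes the operator norm; ordered pairs in $[N]^2$ include the diagonal pairs $(j,j)$. *)

theory Defs
  imports "HOL-Analysis.Analysis"
begin

text \<open>A finite-dimensional complex Hilbert space is modelled as \<open>complex ^ 'n\<close>
  (with its standard Euclidean inner product / norm); operators are matrices
  \<open>complex ^ 'n ^ 'n\<close> acting by \<open>*v\<close>.\<close>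

definition cadjoint :: "complex ^ 'n ^ 'm \<Rightarrow> complex ^ 'm ^ 'n" where
  "cadjoint A = (\<chi> i j. cnj (A $ j $ i))"

definition orth_proj :: "complex ^ 'n ^ 'n \<Rightarrow> bool" where
  "orth_proj P \<longleftrightarrow> P ** P = P \<and> cadjoint P = P"

definition opnorm :: "complex ^ 'n ^ 'm \<Rightarrow> real" where
  "opnorm A = onorm (\<lambda>x. A *v x)"

end

theory Submission
  imports Defs
begin

text \<open>For a unit vector \<open>x\<close>, \<open>\<parallel>\<Sum>\<^sub>j P\<^sub>j x\<parallel>\<^sup>2\<close> is the sum over all \<open>N\<^sup>2\<close> ordered pairs of
  \<open>Re \<langle>P\<^sub>j x, P\<^sub>l x\<rangle> = Re \<langle>x, P\<^sub>j P\<^sub>l x\<rangle>\<close>. Every term is at most 1, and at most \<open>\<alpha>\<close> for the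
  \<open>\<delta>N\<^sup>2\<close> good pairs, so the average of the projections has squared norm at most
  \<open>1 - \<delta>(1 - \<alpha>)\<close>; finally \<open>sqrt (1 - t) \<le> 1 - t/2\<close>.\<close>

lemma scaleR_matrix_vector_mult:
  fixes A :: "'a::real_algebra_1 ^ 'n ^ 'm"
  shows "(c *\<^sub>R A) *v x = c *\<^sub>R (A *v x)"
  by (simp add: vec_eq_iff matrix_vector_mult_def scaleR_sum_right)

lemma sum_matrix_vector_mult:
  fixes A :: "'i \<Rightarrow> 'a::semiring_1 ^ 'n ^ 'm"
  shows "(\<Sum>j\<in>S. A j) *v x = (\<Sum>j\<in>S. A j *v x)"
  by (induction S rule: infinite_finite_induct) (auto simp: matrix_vector_mult_add_rdistrib)

lemma inner_matrix_vector_mult_cadjoint: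
  fixes A :: "complex ^ 'n ^ 'm"
  shows "inner (A *v x) y = inner x (cadjoint A *v y)"
proof -
  have inner_complex: "inner a b = Re (a * cnj b)" for a b :: complex
    by (simp add: inner_complex_def)
  have "inner (A *v x) y = Re (\<Sum>i\<in>UNIV. \<Sum>j\<in>UNIV. A$i$j * x$j * cnj (y$i))"
    by (simp add: inner_vec_def inner_complex matrix_vector_mult_def sum_distrib_right Re_sum)
  also have "\<dots> = Re (\<Sum>j\<in>UNIV. \<Sum>i\<in>UNIV. A$i$j * x$j * cnj (y$i))"
    by (subst sum.swap) simp
  also have "\<dots> = inner x (cadjoint A *v y)"
    by (simp add: inner_vec_def inner_complex matrix_vector_mult_def cadjoint_def
        sum_distrib_left Re_sum mult_ac)
  finally show ?thesis .
qed

lemma norm_matrix_vector_mult_le_opnorm: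
  fixes A :: "complex ^ 'n ^ 'm"
  shows "norm (A *v x) \<le> opnorm A * norm x"
  unfolding opnorm_def by (rule onorm[OF matrix_vector_mul_bounded_linear])

lemma opnorm_le_sqrt:
  fixes A :: "complex ^ 'n ^ 'm"
  assumes "\<And>x. (norm (A *v x))\<^sup>2 \<le> c * (norm x)\<^sup>2"
  shows "opnorm A \<le> sqrt c"
  unfolding opnorm_def
proof (rule onorm_le)
  fix x
  have "norm (A *v x) \<le> sqrt (c * (norm x)\<^sup>2)"
    using assms by (rule real_le_rsqrt)
  then show "norm (A *v x) \<le> sqrt c * norm x"
    by (simp add: real_sqrt_mult)
qed

lemma orth_proj_inner_commute:
  assumes "orth_proj P"
  shows "inner (P *v x) y = inner x (P *v y)"
  using assms inner_matrix_vector_mult_cadjoint[of P] by (simp add: orth_proj_def)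

lemma norm_orth_proj_le:
  assumes "orth_proj P"
  shows "norm (P *v x) \<le> norm x"
proof -
  have "norm (P *v x) ^ 2 = inner x (P *v (P *v x))"
    by (simp add: power2_norm_eq_inner orth_proj_inner_commute[OF assms])
  also have "\<dots> = inner x (P *v x)"
    using assms by (simp add: matrix_vector_mul_assoc orth_proj_def)
  also have "\<dots> \<le> norm x * norm (P *v x)"
    by (rule norm_cauchy_schwarz)
  finally have "norm (P *v x) * norm (P *v x) \<le> norm x * norm (P *v x)"
    by (simp add: power2_eq_square)
  then show ?thesis
    by (cases "P *v x = 0") simp_all
qed

lemma inner_orth_proj_pair_le_opnorm:
  assumes "orth_proj P"
  shows "inner (P *v x) (Q *v x) \<le> opnorm (P ** Q) * (norm x)\<^sup>2"
proof -
  have "inner (P *v x) (Q *v x) = inner x ((P ** Q) *v x)"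
    by (simp add: orth_proj_inner_commute[OF assms] matrix_vector_mul_assoc)
  also have "\<dots> \<le> norm x * norm ((P ** Q) *v x)"
    by (rule norm_cauchy_schwarz)
  also have "\<dots> \<le> norm x * (opnorm (P ** Q) * norm x)"
    by (intro mult_left_mono norm_matrix_vector_mult_le_opnorm) simp
  finally show ?thesis
    by (simp add: power2_eq_square mult_ac)
qed

lemma inner_orth_proj_pair_le:
  assumes "orth_proj P" "orth_proj Q"
  shows "inner (P *v x) (Q *v x) \<le> (norm x)\<^sup>2"
proof -
  have "inner (P *v x) (Q *v x) \<le> norm (P *v x) * norm (Q *v x)"
    by (rule norm_cauchy_schwarz)
  also have "\<dots> \<le> norm x * norm x"
    using assms by (intro mult_mono norm_orth_proj_le) simp_all
  finally show ?thesis
    by (simp add: power2_eq_square)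
qed

lemma sum_le_two_bounds:
  fixes f :: "'a \<Rightarrow> real"
  assumes "finite A" "G \<subseteq> A"
    and "\<And>p. p \<in> A \<Longrightarrow> f p \<le> b" "\<And>p. p \<in> G \<Longrightarrow> f p \<le> a"
  shows "sum f A \<le> b * real (card A) - (b - a) * real (card G)"
proof -
  have "finite G"
    using assms(1,2) finite_subset by blast
  have "sum f A = sum f G + sum f (A - G)"
    using assms(1,2) by (metis sum.subset_diff add.commute)
  also have "\<dots> \<le> (\<Sum>p\<in>G. a) + (\<Sum>p\<in>A - G. b)"
    using assms(3,4) by (intro add_mono sum_mono) auto
  also have "\<dots> = b * real (card A) - (b - a) * real (card G)"
    using assms(1,2) \<open>finite G\<close>
    by (simp add: card_Diff_subset of_nat_diff card_mono algebra_simps)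
  finally show ?thesis .
qed

lemma power2_norm_sum:
  fixes v :: "'a \<Rightarrow> 'b::real_inner"
  shows "(norm (sum v S))\<^sup>2 = (\<Sum>j\<in>S. \<Sum>l\<in>S. inner (v j) (v l))"
  unfolding power2_norm_eq_inner inner_sum_left inner_sum_right by (rule sum.swap)

lemma power2_norm_sum_orth_proj_le:
  assumes "finite S" "\<And>j. j \<in> S \<Longrightarrow> orth_proj (P j)"
    and "G \<subseteq> S \<times> S" "\<And>j l. (j, l) \<in> G \<Longrightarrow> opnorm (P j ** P l) \<le> \<alpha>"
  shows "(norm (\<Sum>j\<in>S. P j *v x))\<^sup>2
           \<le> (real (card S) ^ 2 - (1 - \<alpha>) * real (card G)) * (norm x)\<^sup>2"
proof -
  have "(norm (\<Sum>j\<in>S. P j *v x))\<^sup>2 = (\<Sum>(j, l)\<in>S \<times> S. inner (P j *v x) (P l *v x))"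
    by (simp add: power2_norm_sum sum.cartesian_product)
  also have "\<dots> \<le> (norm x)\<^sup>2 * real (card (S \<times> S)) - ((norm x)\<^sup>2 - \<alpha> * (norm x)\<^sup>2) * real (card G)"
  proof (rule sum_le_two_bounds)
    show "(\<lambda>(j, l). inner (P j *v x) (P l *v x)) p \<le> (norm x)\<^sup>2" if "p \<in> S \<times> S" for p
      using that assms(2) by (auto intro: inner_orth_proj_pair_le split: prod.splits)
    show "(\<lambda>(j, l). inner (P j *v x) (P l *v x)) p \<le> \<alpha> * (norm x)\<^sup>2" if "p \<in> G" for p
    proof (cases p)
      case (Pair j l)
      then have "inner (P j *v x) (P l *v x) \<le> opnorm (P j ** P l) * (norm x)\<^sup>2"
        using that assms(2,3) inner_orth_proj_pair_le_opnorm by blast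
      also have "\<dots> \<le> \<alpha> * (norm x)\<^sup>2"
        using that Pair assms(4) by (intro mult_right_mono) simp_all
      finally show ?thesis
        using Pair by simp
    qed
  qed (use assms in auto)
  also have "\<dots> = (real (card S) ^ 2 - (1 - \<alpha>) * real (card G)) * (norm x)\<^sup>2"
    by (simp add: card_cartesian_product power2_eq_square algebra_simps)
  finally show ?thesis .
qed

lemma sqrt_one_minus_le:
  fixes t :: real
  assumes "t \<le> 2"
  shows "sqrt (1 - t) \<le> 1 - t / 2"
  using assms by (intro real_le_lsqrt) (simp_all add: power2_eq_square algebra_simps)

theorem lemma4p13:
  fixes P :: "nat \<Rightarrow> complex ^ 'n ^ 'n"
    and N :: nat and \<delta> \<alpha> :: real
  assumes proj: "\<And>j. j \<in> {1..N} \<Longrightarrow> orth_proj (P j)"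
    and delta: "0 \<le> \<delta>" "\<delta> \<le> 1"
    and alpha: "0 \<le> \<alpha>" "\<alpha> \<le> 1"
    and pairs: "\<delta> * real N ^ 2 \<le>
      real (card {(j, l). j \<in> {1..N} \<and> l \<in> {1..N} \<and> opnorm (P j ** P l) \<le> \<alpha>})"
  shows "opnorm ((1 / real N) *\<^sub>R (\<Sum>j = 1..N. P j))
           \<le> 1 - \<delta> / 2 * (1 - \<alpha>)"
proof -
  define G where "G = {(j, l). j \<in> {1..N} \<and> l \<in> {1..N} \<and> opnorm (P j ** P l) \<le> \<alpha>}"
  define t where "t = \<delta> * (1 - \<alpha>)"
  have "t \<le> 1"
    using delta alpha by (simp add: t_def mult_le_one)
  have "(1 - \<alpha>) * (\<delta> * real N ^ 2) \<le> (1 - \<alpha>) * real (card G)"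
    using pairs alpha unfolding G_def by (intro mult_left_mono) simp_all
  then have count: "real N ^ 2 - (1 - \<alpha>) * real (card G) \<le> (1 - t) * real N ^ 2"
    by (simp add: t_def algebra_simps)
  have "(norm (((1 / real N) *\<^sub>R (\<Sum>j = 1..N. P j)) *v x))\<^sup>2 \<le> (1 - t) * (norm x)\<^sup>2" for x
  proof -
    have "(norm (((1 / real N) *\<^sub>R (\<Sum>j = 1..N. P j)) *v x))\<^sup>2
            = (norm (\<Sum>j = 1..N. P j *v x))\<^sup>2 / real N ^ 2"
      by (simp add: scaleR_matrix_vector_mult sum_matrix_vector_mult power_mult_distrib power_divide)
    also have "\<dots> \<le> (real (card {1..N}) ^ 2 - (1 - \<alpha>) * real (card G)) * (norm x)\<^sup>2 / real N ^ 2"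
      by (intro divide_right_mono power2_norm_sum_orth_proj_le) (auto simp: G_def proj)
    also have "\<dots> \<le> (1 - t) * real N ^ 2 * (norm x)\<^sup>2 / real N ^ 2"
      using count by (intro divide_right_mono mult_right_mono) simp_all
    also have "\<dots> \<le> (1 - t) * (norm x)\<^sup>2"
      using \<open>t \<le> 1\<close> by (cases "N = 0") simp_all
    finally show ?thesis .
  qed
  then have "opnorm ((1 / real N) *\<^sub>R (\<Sum>j = 1..N. P j)) \<le> sqrt (1 - t)"
    by (rule opnorm_le_sqrt)
  also have "\<dots> \<le> 1 - \<delta> / 2 * (1 - \<alpha>)"
    using sqrt_one_minus_le[of t] \<open>t \<le> 1\<close> by (simp add: t_def)
  finally show ?thesis .
qed

end
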